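(* For $\theta\in(0,\pi/2)$ let $c_1(\theta)=\tfrac12-\tfrac{\theta}{\pi}$, $c_2(\theta)=\tfrac{\cot\theta}{\pi-2\theta}$, and $$\mu_n(\theta)=-\sqrt{\frac{\log(nc_1(\theta))}{c_2(\theta)}},\qquad [\sigma_n(\theta)]^2=\frac{-\log\log 2}{2c_2(\theta)\big(\log(nc_1(\theta))-\log\log 2\big)}.$$ (1) For each $\theta\in(0,\pi/2)$ there exists an integer $n^*(\theta)$ such that for all $n\ge n^*(\theta)$, all $m\in\{1,\dots,n\}$, all $\rho\in(0,1]$ and all $\alpha\in(0,1]$, $$p^{\mathrm{G}}_{\mathrm{success}}(n,m,\alpha,\rho)\ge p^{\mathrm{G}}_{\mathrm{success}}(n,1,\alpha,\rho)\ge\Phi\!\left(\frac{\Phi^{-1}(\alpha)-\rho\,\mu_n(\theta)}{\sqrt{1-\rho^2+\rho^2[\sigma_n(\theta)]^2}}\right).$$ (2) Consequently, taking for each $\theta$ the least such integer $n^*(\theta)$ and setting $\Theta_n=\{\theta\in(0,\pi/2):n\ge n^*(\theta)\}$, for every $n\in\mathbb N$, $m\in\{1,\dots,n\}$, $\rho\in(0,1]$, $\alpha\in(0,1]$, $$p^{\mathrm{G}}_{\mathrm{success}}(n,m,\alpha,\rho)\ge p^{\mathrm{G}}_{\mathrm{success}}(n,1,\alpha,\rho)\ge\sup_{\theta\in\Theta_n}\Phi\!\left(\frac{\Phi^{-1}(\alpha)-\rho\,\mu_n(\theta)}{\sqrt{1-\rho^2+\rho^2[\sigma_n(\theta)]^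2}}\right).$$
   Context: Ordinal optimisation model: let $(Z_1,X_1),\dots,(Z_n,X_n)$ be i.i.d. copies of a pair $(Z,X)$ of real random variables. Order $Z_1,\dots,Z_n$ increasingly as $Z_{1:n}\le\dots\le Z_{n:n}$ and let $X_{\langle i\rangle}$ denote the $X$-value paired with $Z_{i:n}$. Let $x^*_\alpha$ be the $\alpha$-quantile of $X$. The success probability is $\Pr(\min_{1\le i\le m}X_{\langle i\rangle}\le x^*_\alpha)$. Gaussian copula model with correlation $\rho$: $Z,X$ have continuous marginal CDFs $F_Z,F_X$ and joint CDF $\boldsymbol\Phi_{\rho}(\Phi^{-1}(F_Z(z)),\Phi^{-1}(F_X(x)))$, with $\Phi$ the standard normal CDF and $\boldsymbol\Phi_\rho$ the standard bivariate normal CDF with correlation $\rho$. The success probability in this model is $p^{\mathrm{G}}_{\mathrm{success}}(n,m,\alpha,\rho)$. $\log$ is the natural logarithm. *)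

theory Defs
  imports "HOL-Probability.Probability"
begin

definition std_normal :: "real measure" where
  "std_normal = density lborel std_normal_density"

definition Phi :: "real \<Rightarrow> real" where
  "Phi x = measure std_normal {..x}"

text \<open>Quantile function, used only for 0 < alpha < 1 (where it is the unique solution).\<close>
definition Phi_inv :: "real \<Rightarrow> real" where
  "Phi_inv a = (THE x. Phi x = a)"

text \<open>Gaussian copula model with correlation rho.  The success probability depends only
  on the copula (it is invariant under strictly increasing transformations of Z and X),
  so we realise the model with standard normal marginals:
  Z = U, X = rho U + sqrt(1 - rho^2) V with U, V i.i.d. standard normal
  (this also covers the degenerate case rho = 1).\<close>

definition pair_measure_UV :: "(real \<times> real) measure" where
  "pair_measure_UV = std_normal \<Otimes>\<^sub>M std_normal"

definition Zval :: "real \<times> real \<Rightarrow> real" where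
  "Zval uv = fst uv"

definition Xval :: "real \<Rightarrow> real \<times> real \<Rightarrow> real" where
  "Xval \<rho> uv = \<rho> * fst uv + sqrt (1 - \<rho>\<^sup>2) * snd uv"

definition sample_space :: "nat \<Rightarrow> (nat \<Rightarrow> real \<times> real) measure" where
  "sample_space n = PiM {..<n} (\<lambda>_. pair_measure_UV)"

text \<open>Success event: min over the m pairs with the smallest Z-values of the X-values is
  at most the alpha-quantile of X.  Index i is among the m smallest Z-values iff fewer than
  m indices j have strictly smaller Z (ties have probability zero).  For X standard normal,
  X <= x*_alpha iff Phi X <= alpha (for alpha = 1 the quantile is +infinity and the
  condition is always true).\<close>

definition p_success_G :: "nat \<Rightarrow> nat \<Rightarrow> real \<Rightarrow> real \<Rightarrow> real" where
  "p_success_G n m \<alpha> \<rho> = measure (sample_space n)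
     {\<omega> \<in> space (sample_space n).
        \<exists>i<n. card {j \<in> {..<n}. Zval (\<omega> j) < Zval (\<omega> i)} < m
              \<and> Phi (Xval \<rho> (\<omega> i)) \<le> \<alpha>}"

definition c1 :: "real \<Rightarrow> real" where
  "c1 \<theta> = 1/2 - \<theta> / pi"

definition c2 :: "real \<Rightarrow> real" where
  "c2 \<theta> = cot \<theta> / (pi - 2 * \<theta>)"

definition mu_n :: "nat \<Rightarrow> real \<Rightarrow> real" where
  "mu_n n \<theta> = - sqrt (ln (real n * c1 \<theta>) / c2 \<theta>)"

definition sigma2_n :: "nat \<Rightarrow> real \<Rightarrow> real" where
  "sigma2_n n \<theta> = - ln (ln 2) / (2 * c2 \<theta> * (ln (real n * c1 \<theta>) - ln (ln 2)))"

text \<open>The lower bound Phi((Phi^{-1}(alpha) - rho mu_n)/sqrt(1 - rho^2 + rho^2 sigma_n^2)).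
  For alpha = 1 we have Phi^{-1}(1) = +infinity and the bound equals 1.\<close>
definition gauss_bound :: "nat \<Rightarrow> real \<Rightarrow> real \<Rightarrow> real \<Rightarrow> real" where
  "gauss_bound n \<theta> \<alpha> \<rho> =
     (if \<alpha> \<ge> 1 then 1
      else Phi ((Phi_inv \<alpha> - \<rho> * mu_n n \<theta>) / sqrt (1 - \<rho>\<^sup>2 + \<rho>\<^sup>2 * sigma2_n n \<theta>)))"

definition good_threshold :: "real \<Rightarrow> nat \<Rightarrow> bool" where
  "good_threshold \<theta> n0 \<longleftrightarrow>
     (\<forall>n\<ge>n0. \<forall>m\<in>{1..n}. \<forall>\<rho>\<in>{0<..1}. \<forall>\<alpha>\<in>{0<..1}.
        p_success_G n 1 \<alpha> \<rho> \<le> p_success_G n m \<alpha> \<rho> \<and>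
        gauss_bound n \<theta> \<alpha> \<rho> \<le> p_success_G n 1 \<alpha> \<rho>)"

definition n_star :: "real \<Rightarrow> nat" where
  "n_star \<theta> = (LEAST n0. good_threshold \<theta> n0)"

definition Theta_n :: "nat \<Rightarrow> real set" where
  "Theta_n n = {\<theta>. 0 < \<theta> \<and> \<theta> < pi/2 \<and> n \<ge> n_star \<theta>}"

end

theory Submission
  imports Defs "HOL-Real_Asymp.Real_Asymp"
begin

text \<open>
  Let \<open>i\<^sup>*\<close> be the index of the smallest \<open>Z\<close>-value, \<open>Y = Z\<^sub>i\<^sub>*\<close> the minimum of \<open>n\<close> standard
  normal variables and \<open>V\<close> the noise of that pair, so that \<open>X\<^sub>i\<^sub>* = \<rho> Y + sqrt (1 - \<rho>\<^sup>2) V\<close>.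
  The pair \<open>i\<^sup>*\<close> has rank one, hence success contains the event
  \<open>\<rho> Y + sqrt (1 - \<rho>\<^sup>2) V \<le> \<Phi>\<^sup>-\<^sup>1(\<alpha>)\<close>, and enlarging \<open>m\<close> only enlarges the success event.
  The variables \<open>Y\<close> and \<open>V\<close> are independent, \<open>V\<close> is standard normal and \<open>Y\<close> has distribution
  function \<open>1 - (1 - \<Phi>)\<^sup>n\<close>. Gaussian tail estimates show that for large \<open>n\<close> this function dominates
  the distribution function of \<open>N(\<mu>\<^sub>n, \<sigma>\<^sub>n\<^sup>2)\<close>; replacing \<open>Y\<close> by an independent
  \<open>N(\<mu>\<^sub>n, \<sigma>\<^sub>n\<^sup>2)\<close> variable therefore decreases the probability of the half-plane event,
  and for two independent Gaussians that probability is the stated value of \<open>\<Phi>\<close>.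
\<close>

section \<open>The standard normal distribution\<close>

lemma prob_space_std_normal: "prob_space std_normal"
  using real_dist_normal_dist unfolding std_normal_def real_distribution_def by blast

interpretation N: prob_space std_normal
  by (rule prob_space_std_normal)

lemma sets_std_normal [simp, measurable_cong]: "sets std_normal = sets borel"
  by (simp add: std_normal_def)

lemma space_std_normal [simp]: "space std_normal = UNIV"
  by (simp add: std_normal_def)

lemma real_distribution_std_normal: "real_distribution std_normal"
  by (simp add: real_distribution_def real_distribution_axioms_def prob_space_std_normal)

lemma Phi_eq_cdf: "Phi = cdf std_normal"
  by (auto simp: Phi_def cdf_def)

lemma emeasure_std_normal:
  "A \<in> sets borel \<Longrightarrow>
    emeasure std_normal A = (\<integral>\<^sup>+ x. ennreal (std_normal_density x) * indicator A x \<partial>lborel)"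
  unfolding std_normal_def by (subst emeasure_density) auto

lemma measure_std_normal_singleton [simp]: "measure std_normal {x} = 0"
proof -
  have "emeasure std_normal {x} = (\<integral>\<^sup>+ u. ennreal (std_normal_density u) * indicator {x} u \<partial>lborel)"
    by (rule emeasure_std_normal) simp
  also have "\<dots> = (\<integral>\<^sup>+ (u::real). 0 \<partial>lborel)"
    using AE_lborel_singleton[of x] by (intro nn_integral_cong_AE) (auto elim!: eventually_mono)
  finally show ?thesis by (simp add: measure_def)
qed

lemma isCont_Phi: "isCont Phi x"
  unfolding Phi_eq_cdf
  using finite_borel_measure.isCont_cdf real_distribution.finite_borel_measure_M[OF real_distribution_std_normal]
  by simp

lemma Phi_mono: "x \<le> y \<Longrightarrow> Phi x \<le> Phi y"
  unfolding Phi_eq_cdf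
  using finite_borel_measure.cdf_nondecreasing real_distribution.finite_borel_measure_M[OF real_distribution_std_normal]
  by blast

lemma Phi_nonneg: "0 \<le> Phi x"
  by (simp add: Phi_def)

lemma Phi_le_1: "Phi x \<le> 1"
  unfolding Phi_eq_cdf using real_distribution.cdf_bounded_prob[OF real_distribution_std_normal] by blast

lemma Phi_at_top: "(Phi \<longlongrightarrow> 1) at_top"
  unfolding Phi_eq_cdf using real_distribution.cdf_lim_at_top_prob[OF real_distribution_std_normal] .

lemma Phi_at_bot: "(Phi \<longlongrightarrow> 0) at_bot"
  unfolding Phi_eq_cdf
  using finite_borel_measure.cdf_lim_at_bot real_distribution.finite_borel_measure_M[OF real_distribution_std_normal]
  by blast

lemma Phi_diff: "x < y \<Longrightarrow> Phi y - Phi x = measure std_normal {x<..y}"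
  unfolding Phi_eq_cdf
  using finite_borel_measure.cdf_diff_eq real_distribution.finite_borel_measure_M[OF real_distribution_std_normal]
  by simp

lemma measure_std_normal_Ioi: "measure std_normal {x<..} = 1 - Phi x"
proof -
  have "measure std_normal {x<..} = measure std_normal (space std_normal - {..x})"
    by (intro arg_cong[where f = "measure std_normal"]) auto
  also have "\<dots> = 1 - Phi x"
    unfolding Phi_def by (rule N.prob_compl) simp
  finally show ?thesis .
qed

lemma measure_std_normal_Ici: "measure std_normal {x..} = 1 - Phi x"
proof -
  have "measure std_normal ({x} \<union> {x<..}) = measure std_normal {x} + measure std_normal {x<..}"
    by (rule N.finite_measure_Union) auto
  moreover have "{x} \<union> {x<..} = {x..}" by auto
  ultimately show ?thesis by (simp add: measure_std_normal_Ioi)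
qed

lemma measure_std_normal_Ioc_ge:
  assumes "a \<le> b" "0 \<le> m" "\<And>x. a < x \<Longrightarrow> x \<le> b \<Longrightarrow> m \<le> std_normal_density x"
  shows "(b - a) * m \<le> measure std_normal {a<..b}"
proof -
  have "ennreal ((b - a) * m) = (\<integral>\<^sup>+ u. ennreal m * indicator {a<..b} u \<partial>lborel)"
    using assms by (simp add: nn_integral_cmult_indicator ennreal_mult mult.commute)
  also have "\<dots> \<le> (\<integral>\<^sup>+ u. ennreal (std_normal_density u) * indicator {a<..b} u \<partial>lborel)"
    by (rule nn_integral_mono) (auto simp: indicator_def assms(3))
  also have "\<dots> = emeasure std_normal {a<..b}"
    by (rule emeasure_std_normal[symmetric]) simp
  finally show ?thesis
    using assms by (simp add: N.emeasure_eq_measure)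
qed

lemma std_normal_density_antimono_abs:
  "\<bar>x\<bar> \<le> \<bar>y\<bar> \<Longrightarrow> std_normal_density y \<le> std_normal_density x"
  unfolding std_normal_density_def
  by (auto intro!: mult_left_mono divide_right_mono simp: abs_le_square_iff)

lemma Phi_less: assumes "x < y" shows "Phi x < Phi y"
proof -
  let ?m = "min (std_normal_density x) (std_normal_density y)"
  have m: "0 < ?m" by (simp add: normal_density_pos)
  have "?m \<le> std_normal_density u" if "x < u" "u \<le> y" for u
  proof -
    have "\<bar>u\<bar> \<le> \<bar>x\<bar> \<or> \<bar>u\<bar> \<le> \<bar>y\<bar>" using that by auto
    then show ?thesis
      using std_normal_density_antimono_abs by (meson min.coboundedI1 min.coboundedI2)
  qed
  then have "(y - x) * ?m \<le> measure std_normal {x<..y}"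
    using assms m by (intro measure_std_normal_Ioc_ge) auto
  also have "\<dots> = Phi y - Phi x"
    using assms by (simp add: Phi_diff)
  finally have "(y - x) * ?m \<le> Phi y - Phi x" .
  moreover have "0 < (y - x) * ?m" using assms m by simp
  ultimately show ?thesis by linarith
qed

lemma Phi_inject: "Phi x = Phi y \<longleftrightarrow> x = y"
  using Phi_less by (metis less_irrefl linorder_neqE_linordered_idom)

lemma Phi_minus: "Phi (- x) = 1 - Phi x"
proof -
  have "emeasure std_normal {..-x} = (\<integral>\<^sup>+ u. ennreal (std_normal_density u) * indicator {..-x} u \<partial>lborel)"
    by (rule emeasure_std_normal) simp
  also have "\<dots> = ennreal \<bar>-1\<bar> * (\<integral>\<^sup>+ u. ennreal (std_normal_density (0 + -1 * u)) * indicator {..-x} (0 + -1 * u) \<partial>lborel)"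
    by (rule nn_integral_real_affine) auto
  also have "\<dots> = (\<integral>\<^sup>+ u. ennreal (std_normal_density u) * indicator {x..} u \<partial>lborel)"
    by (auto intro!: nn_integral_cong simp: std_normal_density_def indicator_def)
  also have "\<dots> = emeasure std_normal {x..}"
    by (rule emeasure_std_normal[symmetric]) simp
  finally show ?thesis
    by (simp add: Phi_def N.emeasure_eq_measure measure_std_normal_Ici)
qed

lemma Phi_0: "Phi 0 = 1/2"
  using Phi_minus[of 0] by simp

lemma Phi_Phi_inv: assumes "0 < a" "a < 1" shows "Phi (Phi_inv a) = a"
proof -
  have "\<forall>\<^sub>F x in at_top. a < Phi x"
    using Phi_at_top assms(2) by (simp add: order_tendsto_iff)
  then obtain b where b: "a < Phi b"
    by (auto simp: eventually_at_top_linorder)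
  have "\<forall>\<^sub>F x in at_bot. Phi x < a"
    using Phi_at_bot assms(1) by (simp add: order_tendsto_iff)
  then obtain c where c: "c \<le> b" "Phi c < a"
    unfolding eventually_at_bot_linorder by (meson nle_le)
  have "\<exists>x. c \<le> x \<and> x \<le> b \<and> Phi x = a"
    using b c isCont_Phi by (intro IVT) auto
  then obtain x where "Phi x = a" by blast
  moreover have "Phi_inv a = x"
    unfolding Phi_inv_def using \<open>Phi x = a\<close> Phi_inject by (intro the_equality) auto
  ultimately show ?thesis by simp
qed

lemma Phi_minus_le_half: "0 \<le> x \<Longrightarrow> Phi (- x) \<le> 1/2"
  using Phi_mono[of "- x" 0] Phi_0 by simp

lemma Phi_minus_le_exp: assumes "0 \<le> x" shows "Phi (- x) \<le> exp (- x\<^sup>2 / 2)"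
proof -
  have "ennreal (std_normal_density u) * indicator {..-x} u \<le> ennreal (exp (- x\<^sup>2 / 2) * normal_density (-x) 1 u)" for u
  proof (cases "u \<le> -x")
    case True
    then have "x * (x + u) \<le> 0" using assms by (intro mult_nonneg_nonpos) auto
    then have "- u\<^sup>2 / 2 \<le> - x\<^sup>2 / 2 + (- (u - -x)\<^sup>2 / 2)"
      by (simp add: power2_eq_square algebra_simps)
    then have "exp (- u\<^sup>2 / 2) \<le> exp (- x\<^sup>2 / 2) * exp (- (u - -x)\<^sup>2 / 2)"
      by (simp add: exp_add[symmetric])
    then have "std_normal_density u \<le> exp (- x\<^sup>2 / 2) * normal_density (-x) 1 u"
      by (simp add: std_normal_density_def normal_density_def divide_right_mono)
    then show ?thesis using True by (simp add: ennreal_leI)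
  qed simp
  then have "emeasure std_normal {..-x} \<le> (\<integral>\<^sup>+ u. ennreal (exp (- x\<^sup>2 / 2)) * ennreal (normal_density (-x) 1 u) \<partial>lborel)"
    by (subst emeasure_std_normal) (auto intro!: nn_integral_mono simp: ennreal_mult[symmetric] ennreal_leI)
  also have "\<dots> = ennreal (exp (- x\<^sup>2 / 2)) * (\<integral>\<^sup>+ u. ennreal (normal_density (-x) 1 u) \<partial>lborel)"
    by (rule nn_integral_cmult) simp
  also have "(\<integral>\<^sup>+ u. ennreal (normal_density (-x) 1 u) \<partial>lborel) = 1"
    by (subst nn_integral_eq_integral) auto
  finally show ?thesis
    by (simp add: N.emeasure_eq_measure Phi_def)
qed

lemma Phi_minus_ge: assumes "0 \<le> x" shows "exp (- (x + 1)\<^sup>2 / 2) / sqrt (2 * pi) \<le> Phi (- x)"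
proof -
  have "(- x - (- x - 1)) * std_normal_density (x + 1) \<le> measure std_normal {- x - 1<..- x}"
    using assms
    by (intro measure_std_normal_Ioc_ge) (auto intro!: std_normal_density_antimono_abs simp: normal_density_nonneg)
  also have "\<dots> \<le> Phi (- x)"
    unfolding Phi_def by (rule N.finite_measure_mono) auto
  finally show ?thesis by (simp add: std_normal_density_def)
qed

section \<open>Gaussian tail bounds for the minimum of standard normal variables\<close>

definition min_cdf :: "nat \<Rightarrow> real \<Rightarrow> real" where
  "min_cdf n t = 1 - (1 - Phi t) ^ n"

lemma one_minus_power_le_exp:
  fixes p :: real assumes "0 \<le> p" "p \<le> 1" shows "(1 - p) ^ n \<le> exp (- (n * p))"
proof -
  have "(1 - p) ^ n \<le> exp (- p) ^ n"
    using assms exp_ge_add_one_self[of "- p"] by (intro power_mono) auto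
  then show ?thesis by (simp add: exp_of_nat_mult[symmetric])
qed

lemma div_one_plus_le_one_minus_exp:
  fixes z :: real assumes "0 \<le> z" shows "z / (1 + z) \<le> 1 - exp (- z)"
proof -
  have "exp (- z) \<le> 1 / (1 + z)"
    using assms exp_ge_add_one_self[of z] by (simp add: exp_minus field_simps)
  then show ?thesis using assms by (simp add: field_simps)
qed

lemma power2_add_le_weighted:
  fixes p q e :: real assumes "0 < e" shows "(p + q)\<^sup>2 \<le> (1 + e) * p\<^sup>2 + (1 + 1/e) * q\<^sup>2"
proof -
  have "0 \<le> (e * p - q)\<^sup>2 / e" using assms by simp
  then have "2 * p * q \<le> e * p\<^sup>2 + q\<^sup>2 / e"
    using assms by (simp add: power2_eq_square field_simps)
  then show ?thesis by (simp add: power2_eq_square field_simps)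
qed

lemma min_cdf_ge: "n * Phi t / (1 + n * Phi t) \<le> min_cdf n t"
  using one_minus_power_le_exp[of "Phi t" n] div_one_plus_le_one_minus_exp[of "n * Phi t"]
  by (simp add: min_cdf_def Phi_nonneg Phi_le_1)

lemma Phi_le_min_cdf_left:
  assumes "0 \<le> r" "0 < \<sigma>" "0 < e" "t \<le> - r"
    and "1 + 1/e \<le> 1 / \<sigma>\<^sup>2"
    and "2 * sqrt (2 * pi) * exp ((1 + e) * (r + 1)\<^sup>2 / 2) \<le> n"
  shows "Phi ((t + r) / \<sigma>) \<le> min_cdf n t"
proof -
  define y where "y = - (t + r) / \<sigma>"
  define z where "z = n * Phi t"
  have y: "0 \<le> y" using assms(2,4) by (simp add: y_def divide_nonneg_pos)
  have Phi_y: "Phi ((t + r) / \<sigma>) = Phi (- y)" by (simp add: y_def minus_divide_left add.commute)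
  have z: "0 \<le> z" by (simp add: z_def Phi_nonneg)
  show ?thesis
  proof (cases "1 \<le> z")
    case True
    then have "1/2 \<le> z / (1 + z)" by (simp add: field_simps)
    then show ?thesis
      using Phi_y Phi_minus_le_half[OF y] min_cdf_ge[of n t] unfolding z_def by linarith
  next
    case False
    \<comment> \<open>compare the upper tail bound for \<open>\<Phi>(- y)\<close> with the lower one for \<open>\<Phi> t\<close>, \<open>t = - (r + \<sigma> y)\<close>\<close>
    have "(r + \<sigma> * y + 1)\<^sup>2 \<le> (1 + e) * (r + 1)\<^sup>2 + (1 + 1/e) * (\<sigma> * y)\<^sup>2"
      using power2_add_le_weighted[OF assms(3), of "r + 1" "\<sigma> * y"] by (simp add: add_ac)
    also have "(1 + 1/e) * (\<sigma> * y)\<^sup>2 \<le> y\<^sup>2"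
      using mult_right_mono[OF assms(5), of "(\<sigma> * y)\<^sup>2"] assms(2) by (simp add: power_mult_distrib)
    finally have exp_le: "exp (- y\<^sup>2 / 2) \<le> exp ((1 + e) * (r + 1)\<^sup>2 / 2) * exp (- (r + \<sigma> * y + 1)\<^sup>2 / 2)"
      by (simp add: exp_add[symmetric] field_simps)
    have "t = - (r + \<sigma> * y)" using assms(2) by (simp add: y_def)
    then have tail: "exp (- (r + \<sigma> * y + 1)\<^sup>2 / 2) / sqrt (2 * pi) \<le> Phi t"
      using Phi_minus_ge[of "r + \<sigma> * y"] assms(1,2) y by simp
    have "exp ((1 + e) * (r + 1)\<^sup>2 / 2) * exp (- (r + \<sigma> * y + 1)\<^sup>2 / 2)
        = (2 * sqrt (2 * pi) * exp ((1 + e) * (r + 1)\<^sup>2 / 2))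
          * (exp (- (r + \<sigma> * y + 1)\<^sup>2 / 2) / sqrt (2 * pi)) / 2"
      by simp
    also have "\<dots> \<le> z / 2"
      unfolding z_def using assms(6) tail by (intro divide_right_mono mult_mono) auto
    finally have "exp ((1 + e) * (r + 1)\<^sup>2 / 2) * exp (- (r + \<sigma> * y + 1)\<^sup>2 / 2) \<le> z / 2" .
    then have "Phi (- y) \<le> z / 2"
      using Phi_minus_le_exp[OF y] exp_le by linarith
    moreover have "z / 2 \<le> z / (1 + z)"
      using False z by (simp add: field_simps mult_left_le)
    ultimately show ?thesis
      using Phi_y min_cdf_ge[of n t] unfolding z_def by linarith
  qed
qed

lemma one_minus_Phi_power_le_of_nonpos:
  assumes "0 < \<sigma>" "- r < t" "t \<le> 0"
    and "(r / \<sigma> + 1)\<^sup>2 / 2 + ln (sqrt (2 * pi)) \<le> n * exp (- (r + 1)\<^sup>2 / 2) / sqrt (2 * pi)"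
  shows "(1 - Phi t) ^ n \<le> exp (- ((t + r) / \<sigma> + 1)\<^sup>2 / 2) / sqrt (2 * pi)"
proof -
  have "exp (- (r + 1)\<^sup>2 / 2) \<le> exp (- (- t + 1)\<^sup>2 / 2)"
    using assms(2,3) by (simp add: power_mono)
  then have "exp (- (r + 1)\<^sup>2 / 2) / sqrt (2 * pi) \<le> exp (- (- t + 1)\<^sup>2 / 2) / sqrt (2 * pi)"
    by (simp add: divide_right_mono)
  also have "\<dots> \<le> Phi t"
    using Phi_minus_ge[of "- t"] assms(3) by simp
  finally have "exp (- (r + 1)\<^sup>2 / 2) / sqrt (2 * pi) \<le> Phi t" .
  then have "n * (exp (- (r + 1)\<^sup>2 / 2) / sqrt (2 * pi)) \<le> n * Phi t"
    by (rule mult_left_mono) simp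
  then have "(1 - Phi t) ^ n \<le> exp (- ((r / \<sigma> + 1)\<^sup>2 / 2 + ln (sqrt (2 * pi))))"
    using one_minus_power_le_exp[of "Phi t" n] Phi_nonneg Phi_le_1 assms(4) by (simp add: order_trans)
  also have "\<dots> = exp (- (r / \<sigma> + 1)\<^sup>2 / 2) / sqrt (2 * pi)"
    by (simp add: exp_diff)
  also have "\<dots> \<le> exp (- ((t + r) / \<sigma> + 1)\<^sup>2 / 2) / sqrt (2 * pi)"
  proof -
    have "0 \<le> (t + r) / \<sigma>" "(t + r) / \<sigma> \<le> r / \<sigma>"
      using assms by (simp_all add: divide_right_mono)
    then have "((t + r) / \<sigma> + 1)\<^sup>2 \<le> (r / \<sigma> + 1)\<^sup>2" by (intro power_mono) auto
    then show ?thesis by (intro divide_right_mono) auto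
  qed
  finally show ?thesis .
qed

lemma one_minus_Phi_power_le_of_pos:
  assumes "0 < \<sigma>" "0 < t"
    and "2 / \<sigma>\<^sup>2 \<le> n / 4"
    and "2 * r\<^sup>2 / \<sigma>\<^sup>2 + 1 + ln (sqrt (2 * pi)) \<le> n * ln 2 / 2"
  shows "(1 - Phi t) ^ n \<le> exp (- ((t + r) / \<sigma> + 1)\<^sup>2 / 2) / sqrt (2 * pi)"
proof -
  define w where "w = exp (- ln 2 / 2 - t\<^sup>2 / 4)"
  \<comment> \<open>\<open>1 - \<Phi> t \<le> min (1/2) (exp (- t\<^sup>2 / 2)) \<le> w\<close>, the geometric mean of the two bounds\<close>
  have "(1 - Phi t)\<^sup>2 \<le> w\<^sup>2"
  proof -
    have "Phi (- t) * Phi (- t) \<le> 1/2 * exp (- t\<^sup>2 / 2)"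
      using Phi_minus_le_half[of t] Phi_minus_le_exp[of t] Phi_nonneg assms(2) by (intro mult_mono) auto
    moreover have "w\<^sup>2 = 1/2 * exp (- t\<^sup>2 / 2)"
      by (simp add: w_def power2_eq_square exp_add[symmetric] exp_diff exp_minus field_simps)
    ultimately show ?thesis by (simp add: Phi_minus power2_eq_square)
  qed
  then have "1 - Phi t \<le> w"
    by (rule power2_le_imp_le) (simp add: w_def)
  then have "(1 - Phi t) ^ n \<le> w ^ n"
    using Phi_le_1 by (intro power_mono) auto
  also have "\<dots> = exp (- (n * (ln 2 / 2 + t\<^sup>2 / 4)))"
    by (simp add: w_def exp_of_nat_mult[symmetric] algebra_simps)
  also have "\<dots> \<le> exp (- (((t + r) / \<sigma> + 1)\<^sup>2 / 2 + ln (sqrt (2 * pi))))"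
  proof -
    have "((t + r) / \<sigma> + 1)\<^sup>2 \<le> 2 * ((t + r) / \<sigma>)\<^sup>2 + 2"
      using power2_add_le_weighted[of 1 "(t + r) / \<sigma>" 1] by simp
    moreover have "(t + r)\<^sup>2 \<le> 2 * t\<^sup>2 + 2 * r\<^sup>2"
      using power2_add_le_weighted[of 1 t r] by simp
    ultimately have "((t + r) / \<sigma> + 1)\<^sup>2 / 2 \<le> 2 * t\<^sup>2 / \<sigma>\<^sup>2 + 2 * r\<^sup>2 / \<sigma>\<^sup>2 + 1"
      using assms(1) by (simp add: power_divide divide_right_mono add_divide_distrib[symmetric] field_simps)
    moreover have "2 * t\<^sup>2 / \<sigma>\<^sup>2 \<le> n * t\<^sup>2 / 4"
      using mult_right_mono[OF assms(3), of "t\<^sup>2"] by simp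
    ultimately show ?thesis using assms(4) by (simp add: algebra_simps)
  qed
  also have "\<dots> = exp (- ((t + r) / \<sigma> + 1)\<^sup>2 / 2) / sqrt (2 * pi)"
    by (simp add: exp_diff)
  finally show ?thesis .
qed

lemma Phi_le_min_cdf:
  assumes "0 \<le> r" "0 < \<sigma>" "0 < e"
    and "1 + 1/e \<le> 1 / \<sigma>\<^sup>2"
    and "2 * sqrt (2 * pi) * exp ((1 + e) * (r + 1)\<^sup>2 / 2) \<le> n"
    and "(r / \<sigma> + 1)\<^sup>2 / 2 + ln (sqrt (2 * pi)) \<le> n * exp (- (r + 1)\<^sup>2 / 2) / sqrt (2 * pi)"
    and "2 / \<sigma>\<^sup>2 \<le> n / 4"
    and "2 * r\<^sup>2 / \<sigma>\<^sup>2 + 1 + ln (sqrt (2 * pi)) \<le> n * ln 2 / 2"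
  shows "Phi ((t + r) / \<sigma>) \<le> min_cdf n t"
proof (cases "t \<le> - r")
  case True
  then show ?thesis using Phi_le_min_cdf_left assms(1-5) by blast
next
  case False
  then have "0 \<le> (t + r) / \<sigma>" using assms(2) by simp
  moreover have "(1 - Phi t) ^ n \<le> exp (- ((t + r) / \<sigma> + 1)\<^sup>2 / 2) / sqrt (2 * pi)"
    using False assms one_minus_Phi_power_le_of_nonpos one_minus_Phi_power_le_of_pos
    by (cases "t \<le> 0") auto
  ultimately show ?thesis
    using Phi_minus_ge[of "(t + r) / \<sigma>"] Phi_minus[of "(t + r) / \<sigma>"] by (simp add: min_cdf_def)
qed

lemma left_tail_condition:
  fixes a c e r :: real and n :: nat
  assumes "0 < a" "0 < e" "0 < c" "c \<le> 1" "0 < ln (n * c)" "0 \<le> r" "r\<^sup>2 = ln (n * c) / a"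
    and "2 * sqrt (2 * pi) * exp ((1 + e) * (1 + 1/e) / 2) \<le> n powr (1 - (1 + e)\<^sup>2 / (2 * a))"
  shows "2 * sqrt (2 * pi) * exp ((1 + e) * (r + 1)\<^sup>2 / 2) \<le> n"
proof -
  define \<beta> where "\<beta> = (1 + e)\<^sup>2 / (2 * a)"
  have n: "0 < real n" using assms(5) by (cases "n = 0") auto
  have "(1 + e) * (r + 1)\<^sup>2 / 2 \<le> (1 + e) * ((1 + e) * r\<^sup>2 + (1 + 1/e)) / 2"
    using power2_add_le_weighted[OF assms(2), of r 1] assms(2) by (intro divide_right_mono mult_left_mono) auto
  also have "\<dots> = \<beta> * ln (n * c) + (1 + e) * (1 + 1/e) / 2"
  proof -
    have "ln (n * c) = a * r\<^sup>2" using assms(1,7) by simp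
    then show ?thesis using assms(1,2) by (simp add: \<beta>_def power2_eq_square field_simps)
  qed
  finally have "exp ((1 + e) * (r + 1)\<^sup>2 / 2) \<le> (n * c) powr \<beta> * exp ((1 + e) * (1 + 1/e) / 2)"
    using n assms(3) by (simp add: powr_def exp_add[symmetric])
  also have "(n * c) powr \<beta> \<le> n powr \<beta>"
    using n assms(1,3,4) by (intro powr_mono2) (auto simp: \<beta>_def mult_le_cancel_left1)
  finally have "2 * sqrt (2 * pi) * exp ((1 + e) * (r + 1)\<^sup>2 / 2)
      \<le> 2 * sqrt (2 * pi) * exp ((1 + e) * (1 + 1/e) / 2) * n powr \<beta>"
    by (simp add: mult_left_mono mult.commute)
  also have "\<dots> \<le> n powr (1 - \<beta>) * n powr \<beta>"
    using assms(8) by (intro mult_right_mono) (auto simp: \<beta>_def)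
  also have "\<dots> = n" using n by (simp add: powr_add[symmetric])
  finally show ?thesis .
qed

lemma mid_tail_condition:
  fixes a c e r \<sigma> \<kappa> :: real and n :: nat
  assumes "0 < a" "0 < e" "0 < c" "c \<le> 1" "0 < ln (n * c)" "0 \<le> r" "r\<^sup>2 = ln (n * c) / a"
    and "0 < \<kappa>" "\<sigma>\<^sup>2 = \<kappa> / (2 * a * (ln (n * c) + \<kappa>))"
    and "2 * ln (n * c) * (ln (n * c) + \<kappa>) / \<kappa> + 1 + ln (sqrt (2 * pi))
      \<le> exp (- ((1 + 1/e) / 2)) / sqrt (2 * pi) * n powr (1 - (1 + e)\<^sup>2 / (2 * a))"
  shows "(r / \<sigma> + 1)\<^sup>2 / 2 + ln (sqrt (2 * pi)) \<le> n * exp (- (r + 1)\<^sup>2 / 2) / sqrt (2 * pi)"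
proof -
  define l where "l = ln (n * c)"
  define \<beta> where "\<beta> = (1 + e)\<^sup>2 / (2 * a)"
  define K where "K = (1 + 1/e) / 2"
  have n: "0 < real n" using assms(5) by (cases "n = 0") auto
  have l: "0 < l" "l = a * r\<^sup>2" using assms(1,5,7) by (simp_all add: l_def)
  have "(r / \<sigma>)\<^sup>2 = 2 * l * (l + \<kappa>) / \<kappa>"
    using assms(1,8,9) l by (simp add: power_divide l_def field_simps)
  then have "(r / \<sigma> + 1)\<^sup>2 / 2 + ln (sqrt (2 * pi)) \<le> 2 * l * (l + \<kappa>) / \<kappa> + 1 + ln (sqrt (2 * pi))"
    using power2_add_le_weighted[of 1 "r / \<sigma>" 1] by simp
  also have "\<dots> \<le> exp (- K) / sqrt (2 * pi) * n powr (1 - \<beta>)"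
    unfolding l_def K_def \<beta>_def by (rule assms(10))
  also have "\<dots> \<le> n * exp (- (r + 1)\<^sup>2 / 2) / sqrt (2 * pi)"
  proof -
    have "(r + 1)\<^sup>2 / 2 \<le> ((1 + e) * r\<^sup>2 + (1 + 1/e)) / 2"
      using power2_add_le_weighted[OF assms(2), of r 1] by simp
    also have "\<dots> = (1 + e) / (2 * a) * l + K"
      using assms(1,2) l(2) by (simp add: K_def power2_eq_square field_simps)
    also have "\<dots> \<le> \<beta> * l + K"
    proof -
      have "(1 + e) / (2 * a) \<le> \<beta>"
        using assms(1,2) by (simp add: \<beta>_def power2_eq_square divide_right_mono)
      then have "(1 + e) / (2 * a) * l \<le> \<beta> * l" using l(1) by (intro mult_right_mono) auto
      then show ?thesis by linarith
    qed
    finally have "exp (- K) * (n * c) powr (- \<beta>) \<le> exp (- (r + 1)\<^sup>2 / 2)"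
      using n assms(3) by (simp add: powr_def l_def exp_add[symmetric])
    moreover have "n powr (- \<beta>) \<le> (n * c) powr (- \<beta>)"
      using n assms(1,3,4) by (intro powr_mono2') (auto simp: \<beta>_def mult_le_cancel_left1)
    ultimately have "exp (- K) * n powr (- \<beta>) \<le> exp (- (r + 1)\<^sup>2 / 2)"
      by (smt (verit) exp_gt_zero mult_left_mono)
    then have "n * (exp (- K) * n powr (- \<beta>)) \<le> n * exp (- (r + 1)\<^sup>2 / 2)"
      using n by simp
    moreover have "n * (exp (- K) * n powr (- \<beta>)) = exp (- K) * n powr (1 - \<beta>)"
      using n by (simp add: powr_diff powr_minus field_simps)
    ultimately show ?thesis by (simp add: divide_right_mono)
  qed
  finally show ?thesis .
qed

lemma eventually_tail_conditions:
  fixes a c \<kappa> e \<delta> K K' :: real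
  assumes "1/2 < a" "0 < c" "0 < \<kappa>" "0 < \<delta>" "0 < e"
  shows "\<forall>\<^sub>F n in sequentially. 0 < ln (n * c) \<and>
      1 + 1/e \<le> 2 * a * (ln (n * c) + \<kappa>) / \<kappa> \<and>
      2 * sqrt (2 * pi) * exp K \<le> n powr \<delta> \<and>
      2 * ln (n * c) * (ln (n * c) + \<kappa>) / \<kappa> + 1 + ln (sqrt (2 * pi))
        \<le> exp (- K') / sqrt (2 * pi) * n powr \<delta> \<and>
      4 * a * (ln (n * c) + \<kappa>) / \<kappa> \<le> n / 4 \<and>
      4 * ln (n * c) * (ln (n * c) + \<kappa>) / \<kappa> + 1 + ln (sqrt (2 * pi)) \<le> n * ln 2 / 2"
  unfolding eventually_conj_iff using assms by (intro conjI; real_asymp)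

lemma Phi_le_min_cdf_of_tail_conditions:
  fixes a c \<kappa> e :: real and n :: nat
  defines "l \<equiv> ln (n * c)" and "\<delta> \<equiv> 1 - (1 + e)\<^sup>2 / (2 * a)"
  assumes a: "0 < a" and c: "0 < c" "c \<le> 1" and \<kappa>: "0 < \<kappa>" and e: "0 < e" and l: "0 < l"
    and conds: "1 + 1/e \<le> 2 * a * (l + \<kappa>) / \<kappa>"
      "2 * sqrt (2 * pi) * exp ((1 + e) * (1 + 1/e) / 2) \<le> n powr \<delta>"
      "2 * l * (l + \<kappa>) / \<kappa> + 1 + ln (sqrt (2 * pi)) \<le> exp (- ((1 + 1/e) / 2)) / sqrt (2 * pi) * n powr \<delta>"
      "4 * a * (l + \<kappa>) / \<kappa> \<le> n / 4"
      "4 * l * (l + \<kappa>) / \<kappa> + 1 + ln (sqrt (2 * pi)) \<le> n * ln 2 / 2"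
  shows "Phi ((t + sqrt (l / a)) / sqrt (\<kappa> / (2 * a * (l + \<kappa>)))) \<le> min_cdf n t"
proof -
  define r where "r = sqrt (l / a)"
  define \<sigma> where "\<sigma> = sqrt (\<kappa> / (2 * a * (l + \<kappa>)))"
  have r: "0 \<le> r" "r\<^sup>2 = ln (n * c) / a" using l a by (simp_all add: r_def l_def)
  have \<sigma>: "0 < \<sigma>" "\<sigma>\<^sup>2 = \<kappa> / (2 * a * (ln (n * c) + \<kappa>))"
    using l a \<kappa> by (simp_all add: \<sigma>_def l_def)
  have inv_\<sigma>: "1 / \<sigma>\<^sup>2 = 2 * a * (l + \<kappa>) / \<kappa>"
    using \<sigma>(2) by (simp add: l_def)
  have "r\<^sup>2 / \<sigma>\<^sup>2 = l / a * (2 * a * (l + \<kappa>) / \<kappa>)"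
    using r(2) inv_\<sigma> by (metis l_def times_divide_eq_right mult.right_neutral)
  also have "\<dots> = 2 * l * (l + \<kappa>) / \<kappa>" using a \<kappa> by (simp add: field_simps)
  finally have r_\<sigma>: "r\<^sup>2 / \<sigma>\<^sup>2 = 2 * l * (l + \<kappa>) / \<kappa>" .
  have "Phi ((t + r) / \<sigma>) \<le> min_cdf n t"
  proof (rule Phi_le_min_cdf[OF r(1) \<sigma>(1) e])
    show "1 + 1/e \<le> 1 / \<sigma>\<^sup>2" using conds(1) inv_\<sigma> by simp
    show "2 * sqrt (2 * pi) * exp ((1 + e) * (r + 1)\<^sup>2 / 2) \<le> n"
      using left_tail_condition[OF a e c l[unfolded l_def] r] conds(2) by (simp add: \<delta>_def)
    show "(r / \<sigma> + 1)\<^sup>2 / 2 + ln (sqrt (2 * pi)) \<le> n * exp (- (r + 1)\<^sup>2 / 2) / sqrt (2 * pi)"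
      using mid_tail_condition[OF a e c l[unfolded l_def] r \<kappa> \<sigma>(2)] conds(3) by (simp add: \<delta>_def l_def)
    show "2 / \<sigma>\<^sup>2 \<le> n / 4" using conds(4) inv_\<sigma> by simp
    show "2 * r\<^sup>2 / \<sigma>\<^sup>2 + 1 + ln (sqrt (2 * pi)) \<le> n * ln 2 / 2"
      using conds(5) r_\<sigma> by simp
  qed
  then show ?thesis by (simp add: r_def \<sigma>_def)
qed

lemma eventually_Phi_le_min_cdf:
  fixes a c \<kappa> :: real
  assumes "1/2 < a" "0 < c" "c \<le> 1" "0 < \<kappa>"
  shows "\<forall>\<^sub>F n in sequentially. 0 < ln (n * c) \<and>
    (\<forall>t. Phi ((t + sqrt (ln (n * c) / a)) / sqrt (\<kappa> / (2 * a * (ln (n * c) + \<kappa>)))) \<le> min_cdf n t)"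
proof -
  \<comment> \<open>any \<open>e > 0\<close> with \<open>(1 + e)\<^sup>2 < 2 a\<close> will do\<close>
  define e where "e = sqrt ((1 + 2 * a) / 2) - 1"
  have a: "0 < a" using assms(1) by simp
  have e: "0 < e" using assms(1) by (simp add: e_def real_less_rsqrt)
  have "(1 + e)\<^sup>2 = (1 + 2 * a) / 2" using assms(1) by (simp add: e_def)
  then have \<delta>: "0 < 1 - (1 + e)\<^sup>2 / (2 * a)" using assms(1) by (simp add: field_simps)
  show ?thesis
    using eventually_tail_conditions[OF assms(1,2,4) \<delta> e, of "(1 + e) * (1 + 1/e) / 2" "(1 + 1/e) / 2"]
  proof eventually_elim
    case (elim n)
    then show ?case
      using Phi_le_min_cdf_of_tail_conditions[OF a assms(2-4) e] by blast
  qed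
qed

section \<open>The smallest \<open>Z\<close>-value and its companion noise\<close>

lemma prob_space_pair_measure_UV: "prob_space pair_measure_UV"
  unfolding pair_measure_UV_def by (intro prob_space_pair prob_space_std_normal)

interpretation UV: prob_space pair_measure_UV
  by (rule prob_space_pair_measure_UV)

lemma space_pair_measure_UV [simp]: "space pair_measure_UV = UNIV"
  by (simp add: pair_measure_UV_def space_pair_measure)

lemma sets_pair_measure_UV [measurable_cong]: "sets pair_measure_UV = sets (borel \<Otimes>\<^sub>M borel)"
  unfolding pair_measure_UV_def by (intro sets_pair_measure_cong) simp_all

interpretation PUV: product_prob_space "\<lambda>_::nat. pair_measure_UV" I for I
  by unfold_locales

lemma prob_space_sample_space: "prob_space (sample_space n)"
  unfolding sample_space_def by (rule PUV.P.prob_space_axioms)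

lemma space_sample_space: "space (sample_space n) = PiE {..<n} (\<lambda>_. UNIV)"
  by (simp add: sample_space_def space_PiM)

lemma measurable_component_sample_space:
  "(\<lambda>\<omega>. \<omega> j) \<in> measurable (sample_space n) pair_measure_UV"
proof (cases "j < n")
  case True
  then show ?thesis
    unfolding sample_space_def by (intro measurable_component_singleton) auto
next
  case False
  \<comment> \<open>points of the sample space are extensional, so the component is constant\<close>
  then have "(\<lambda>\<omega>. \<omega> j) \<in> measurable (sample_space n) pair_measure_UV \<longleftrightarrow>
      (\<lambda>_. undefined) \<in> measurable (sample_space n) pair_measure_UV"
    by (intro measurable_cong) (auto simp: space_sample_space PiE_def extensional_def)
  then show ?thesis by simp
qed

lemma borel_measurable_fst_component [measurable]:
  "(\<lambda>\<omega>. fst (\<omega> j)) \<in> borel_measurable (sample_space n)"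
proof -
  have "fst \<in> borel_measurable pair_measure_UV"
    unfolding pair_measure_UV_def by measurable
  with measurable_component_sample_space show ?thesis by (rule measurable_compose)
qed

lemma borel_measurable_snd_component [measurable]:
  "(\<lambda>\<omega>. snd (\<omega> j)) \<in> borel_measurable (sample_space n)"
proof -
  have "snd \<in> borel_measurable pair_measure_UV"
    unfolding pair_measure_UV_def by measurable
  with measurable_component_sample_space show ?thesis by (rule measurable_compose)
qed

lemma nn_integral_pair_measure_UV_fst_snd:
  fixes g :: "real \<Rightarrow> ennreal"
  assumes "g \<in> borel_measurable borel" "B \<in> sets borel"
  shows "(\<integral>\<^sup>+ y. g (fst y) * indicator B (snd y) \<partial>pair_measure_UV)
    = (\<integral>\<^sup>+ u. g u \<partial>std_normal) * emeasure std_normal B"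
proof -
  have m: "(\<lambda>y. g (fst y) * indicator B (snd y)) \<in> borel_measurable (std_normal \<Otimes>\<^sub>M std_normal)"
    using assms by measurable
  have "(\<integral>\<^sup>+ y. g (fst y) * indicator B (snd y) \<partial>pair_measure_UV)
      = (\<integral>\<^sup>+ u. (\<integral>\<^sup>+ v. g u * indicator B v \<partial>std_normal) \<partial>std_normal)"
    unfolding pair_measure_UV_def using N.nn_integral_fst[OF m] by simp
  also have "\<dots> = (\<integral>\<^sup>+ u. g u * emeasure std_normal B \<partial>std_normal)"
    using assms(2) by (simp add: nn_integral_cmult)
  also have "\<dots> = (\<integral>\<^sup>+ u. g u \<partial>std_normal) * emeasure std_normal B"
    using assms(1) by (simp add: nn_integral_multc)
  finally show ?thesis .
qed

lemma nn_integral_fun_upd_indicator_snd: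
  fixes A :: "(nat \<Rightarrow> real \<times> real) set"
  assumes A: "A \<in> sets (PiM (insert i I) (\<lambda>_. pair_measure_UV))" and B: "B \<in> sets borel"
    and x: "x \<in> space (PiM I (\<lambda>_. pair_measure_UV))" "i \<notin> I"
    and A_fst: "\<And>u v v'. x(i := (u, v)) \<in> A \<Longrightarrow> x(i := (u, v')) \<in> A"
  shows "(\<integral>\<^sup>+ y. indicator A (x(i := y)) * indicator B (snd y) \<partial>pair_measure_UV)
    = (\<integral>\<^sup>+ y. indicator A (x(i := y)) \<partial>pair_measure_UV) * emeasure std_normal B"
proof -
  define g where "g u = (indicator A (x(i := (u, 0))) :: ennreal)" for u
  have upd: "(\<lambda>y. x(i := y)) \<in> measurable pair_measure_UV (PiM (insert i I) (\<lambda>_. pair_measure_UV))"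
    using x by (rule measurable_component_update)
  have "(\<lambda>u::real. (u, 0::real)) \<in> measurable borel pair_measure_UV"
    by (simp add: measurable_cong_sets[OF refl sets_pair_measure_UV])
  from measurable_compose[OF measurable_compose[OF this upd] borel_measurable_indicator[OF A]]
  have g: "g \<in> borel_measurable borel"
    by (simp add: g_def[abs_def] comp_def)
  have g_eq: "indicator A (x(i := y)) = g (fst y)" for y
    using A_fst[of "fst y" "snd y" 0] A_fst[of "fst y" 0 "snd y"] by (auto simp: g_def indicator_def)
  have "(\<integral>\<^sup>+ y. indicator A (x(i := y)) * indicator B (snd y) \<partial>pair_measure_UV)
      = (\<integral>\<^sup>+ u. g u \<partial>std_normal) * emeasure std_normal B"
    unfolding g_eq using g B by (rule nn_integral_pair_measure_UV_fst_snd)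
  also have "(\<integral>\<^sup>+ u. g u \<partial>std_normal) = (\<integral>\<^sup>+ y. indicator A (x(i := y)) \<partial>pair_measure_UV)"
    using nn_integral_pair_measure_UV_fst_snd[OF g, of UNIV] N.emeasure_space_1 by (simp add: g_eq)
  finally show ?thesis .
qed

lemma emeasure_Int_snd_component:
  fixes A :: "(nat \<Rightarrow> real \<times> real) set"
  assumes i: "i < n" and A: "A \<in> sets (sample_space n)" and B: "B \<in> sets borel"
    and A_fst: "\<And>\<omega> \<omega>'. \<omega> \<in> A \<Longrightarrow> \<omega>' \<in> space (sample_space n) \<Longrightarrow>
      (\<And>j. j < n \<Longrightarrow> fst (\<omega>' j) = fst (\<omega> j)) \<Longrightarrow> \<omega>' \<in> A"
  shows "emeasure (sample_space n) (A \<inter> {\<omega> \<in> space (sample_space n). snd (\<omega> i) \<in> B})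
    = emeasure (sample_space n) A * emeasure std_normal B"
proof -
  let ?M = "\<lambda>_::nat. pair_measure_UV"
  define I where "I = {..<n} - {i}"
  have I: "finite I" "i \<notin> I" and SI: "sample_space n = PiM (insert i I) ?M"
    using i by (auto simp: I_def sample_space_def insert_absorb)
  have split: "emeasure (sample_space n) X
      = (\<integral>\<^sup>+ x. (\<integral>\<^sup>+ y. indicator X (x(i := y)) \<partial>pair_measure_UV) \<partial>PiM I ?M)"
    if "X \<in> sets (sample_space n)" for X
    using that unfolding SI by (simp add: PUV.product_nn_integral_insert[OF I, symmetric])
  define SB where "SB = {\<omega> \<in> space (sample_space n). snd (\<omega> i) \<in> B}"
  have SB: "SB \<in> sets (sample_space n)"
    unfolding SB_def using B by measurable
  define h where "h x = (\<integral>\<^sup>+ y. indicator A (x(i := y)) \<partial>pair_measure_UV)" for x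
  have inner: "(\<integral>\<^sup>+ y. indicator (A \<inter> SB) (x(i := y)) \<partial>pair_measure_UV) = h x * emeasure std_normal B"
    if x: "x \<in> space (PiM I ?M)" for x
  proof -
    have in_space: "x(i := y) \<in> space (sample_space n)" for y
      using measurable_space[OF measurable_component_update[OF x I(2)]] by (simp add: SI)
    have "indicator (A \<inter> SB) (x(i := y)) = indicator A (x(i := y)) * (indicator B (snd y) :: ennreal)" for y
      using in_space by (simp add: SB_def indicator_inter_arith indicator_def)
    moreover have "x(i := (u, v')) \<in> A" if "x(i := (u, v)) \<in> A" for u v v'
      using A_fst[OF that in_space] by simp
    ultimately show ?thesis
      using nn_integral_fun_upd_indicator_snd[OF A[unfolded SI] B x I(2)] by (simp add: h_def)
  qed
  have h: "h \<in> borel_measurable (PiM I ?M)"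
  proof -
    have "(\<lambda>(x, y). x(i := y)) \<in> measurable (PiM I ?M \<Otimes>\<^sub>M pair_measure_UV) (sample_space n)"
      unfolding SI by (rule measurable_add_dim)
    from measurable_compose[OF this borel_measurable_indicator[OF A]]
    show ?thesis
      unfolding h_def by (intro UV.borel_measurable_nn_integral) (simp add: case_prod_beta')
  qed
  have "emeasure (sample_space n) (A \<inter> SB) = (\<integral>\<^sup>+ x. h x * emeasure std_normal B \<partial>PiM I ?M)"
    using split[of "A \<inter> SB"] A SB inner by (simp cong: nn_integral_cong)
  also have "\<dots> = (\<integral>\<^sup>+ x. h x \<partial>PiM I ?M) * emeasure std_normal B"
    using h by (rule nn_integral_multc)
  also have "(\<integral>\<^sup>+ x. h x \<partial>PiM I ?M) = emeasure (sample_space n) A"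
    using split[OF A] by (simp add: h_def)
  finally show ?thesis by (simp add: SB_def)
qed

definition is_argmin_Z :: "nat \<Rightarrow> (nat \<Rightarrow> real \<times> real) \<Rightarrow> nat \<Rightarrow> bool" where
  "is_argmin_Z n \<omega> k \<longleftrightarrow> k < n \<and> (\<forall>j\<in>{..<n}. fst (\<omega> k) \<le> fst (\<omega> j))"

definition argmin_Z :: "nat \<Rightarrow> (nat \<Rightarrow> real \<times> real) \<Rightarrow> nat" where
  "argmin_Z n \<omega> = (LEAST k. is_argmin_Z n \<omega> k)"

definition min_Z :: "nat \<Rightarrow> (nat \<Rightarrow> real \<times> real) \<Rightarrow> real" where
  "min_Z n \<omega> = fst (\<omega> (argmin_Z n \<omega>))"

definition companion_V :: "nat \<Rightarrow> (nat \<Rightarrow> real \<times> real) \<Rightarrow> real" where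
  "companion_V n \<omega> = snd (\<omega> (argmin_Z n \<omega>))"

lemma ex_is_argmin_Z: assumes "0 < n" shows "\<exists>k. is_argmin_Z n \<omega> k"
proof -
  let ?S = "(\<lambda>j. fst (\<omega> j)) ` {..<n}"
  have S: "finite ?S" "?S \<noteq> {}" using assms by auto
  then obtain k where k: "k < n" "fst (\<omega> k) = Min ?S"
    using Min_in by (metis (no_types, lifting) imageE lessThan_iff)
  then have "\<forall>j<n. fst (\<omega> k) \<le> fst (\<omega> j)" using S by auto
  then show ?thesis using k(1) by (auto simp: is_argmin_Z_def)
qed

lemma is_argmin_argmin_Z: "0 < n \<Longrightarrow> is_argmin_Z n \<omega> (argmin_Z n \<omega>)"
  unfolding argmin_Z_def using ex_is_argmin_Z by (rule LeastI_ex)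

lemma argmin_Z_less: "0 < n \<Longrightarrow> argmin_Z n \<omega> < n"
  using is_argmin_argmin_Z by (auto simp: is_argmin_Z_def)

lemma min_Z_le: "0 < n \<Longrightarrow> j < n \<Longrightarrow> min_Z n \<omega> \<le> fst (\<omega> j)"
  using is_argmin_argmin_Z[of n \<omega>] by (auto simp: is_argmin_Z_def min_Z_def)

lemma argmin_Z_cong:
  "(\<And>j. j < n \<Longrightarrow> fst (\<omega>' j) = fst (\<omega> j)) \<Longrightarrow> argmin_Z n \<omega>' = argmin_Z n \<omega>"
proof -
  assume "\<And>j. j < n \<Longrightarrow> fst (\<omega>' j) = fst (\<omega> j)"
  then have "is_argmin_Z n \<omega>' = is_argmin_Z n \<omega>"
    by (auto simp: is_argmin_Z_def fun_eq_iff)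
  then show ?thesis by (simp add: argmin_Z_def)
qed

lemma sets_is_argmin_Z: "{\<omega> \<in> space (sample_space n). is_argmin_Z n \<omega> k} \<in> sets (sample_space n)"
proof (cases "k < n")
  case True
  have "{\<omega> \<in> space (sample_space n). is_argmin_Z n \<omega> k}
      = (\<Inter>j\<in>{..<n}. {\<omega> \<in> space (sample_space n). fst (\<omega> k) \<le> fst (\<omega> j)})"
    using True by (auto simp: is_argmin_Z_def)
  also have "\<dots> \<in> sets (sample_space n)"
    using True by (intro sets.finite_INT) auto
  finally show ?thesis .
qed (simp add: is_argmin_Z_def)

lemma measurable_argmin_Z:
  "argmin_Z n \<in> measurable (sample_space n) (count_space UNIV)"
  unfolding argmin_Z_def[abs_def] by (intro measurable_Least) (simp add: pred_def sets_is_argmin_Z)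

lemma borel_measurable_min_Z [measurable]: "min_Z n \<in> borel_measurable (sample_space n)"
  unfolding min_Z_def[abs_def]
  by (rule measurable_compose_countable'[OF _ measurable_argmin_Z]) simp_all

lemma borel_measurable_companion_V [measurable]: "companion_V n \<in> borel_measurable (sample_space n)"
  unfolding companion_V_def[abs_def]
  by (rule measurable_compose_countable'[OF _ measurable_argmin_Z]) simp_all

lemma sets_argmin_Z_eq: "{\<omega> \<in> space (sample_space n). argmin_Z n \<omega> = i} \<in> sets (sample_space n)"
  using measurable_sets[OF measurable_argmin_Z, of "{i}"] by (simp add: vimage_def Int_def conj_commute)

lemma emeasure_min_Z_companion_V:
  assumes n: "0 < n" and A: "A \<in> sets borel" and B: "B \<in> sets borel"
  shows "emeasure (sample_space n) {\<omega> \<in> space (sample_space n). min_Z n \<omega> \<in> A \<and> companion_V n \<omega> \<in> B}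
    = emeasure (sample_space n) {\<omega> \<in> space (sample_space n). min_Z n \<omega> \<in> A} * emeasure std_normal B"
proof -
  let ?S = "space (sample_space n)"
  define F where "F i = {\<omega> \<in> ?S. argmin_Z n \<omega> = i \<and> min_Z n \<omega> \<in> A}" for i
  define SB where "SB i = {\<omega> \<in> ?S. snd (\<omega> i) \<in> B}" for i
  have F: "F i \<in> sets (sample_space n)" for i
  proof -
    have "F i = {\<omega> \<in> ?S. argmin_Z n \<omega> = i} \<inter> {\<omega> \<in> ?S. min_Z n \<omega> \<in> A}"
      by (auto simp: F_def)
    then show ?thesis using sets_argmin_Z_eq A by simp
  qed
  have SB: "SB i \<in> sets (sample_space n)" for i
    unfolding SB_def using B by measurable
  \<comment> \<open>on \<open>F i\<close> the companion is the \<open>i\<close>-th noise variable, and \<open>F i\<close> depends on the \<open>Z\<close>-values only\<close>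
  have F_SB: "emeasure (sample_space n) (F i \<inter> SB i) = emeasure (sample_space n) (F i) * emeasure std_normal B"
    if i: "i < n" for i
    unfolding SB_def
  proof (rule emeasure_Int_snd_component[OF i F B])
    fix \<omega> \<omega>' assume "\<omega> \<in> F i" "\<omega>' \<in> ?S" and "\<And>j. j < n \<Longrightarrow> fst (\<omega>' j) = fst (\<omega> j)"
    then show "\<omega>' \<in> F i"
      using argmin_Z_cong[of n \<omega>' \<omega>] argmin_Z_less[OF n, of \<omega>] by (auto simp: F_def min_Z_def)
  qed
  have split: "{\<omega> \<in> ?S. min_Z n \<omega> \<in> A \<and> companion_V n \<omega> \<in> B} = (\<Union>i<n. F i \<inter> SB i)"
    using argmin_Z_less[OF n] by (auto simp: F_def SB_def companion_V_def)
  have "emeasure (sample_space n) {\<omega> \<in> ?S. min_Z n \<omega> \<in> A \<and> companion_V n \<omega> \<in> B}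
      = (\<Sum>i<n. emeasure (sample_space n) (F i \<inter> SB i))"
    unfolding split using F SB by (intro sum_emeasure[symmetric]) (auto simp: disjoint_family_on_def F_def)
  also have "\<dots> = (\<Sum>i<n. emeasure (sample_space n) (F i)) * emeasure std_normal B"
    using F_SB by (simp add: sum_distrib_right)
  also have "(\<Sum>i<n. emeasure (sample_space n) (F i)) = emeasure (sample_space n) {\<omega> \<in> ?S. min_Z n \<omega> \<in> A}"
  proof -
    have union: "{\<omega> \<in> ?S. min_Z n \<omega> \<in> A} = (\<Union>i<n. F i)"
      using argmin_Z_less[OF n] by (auto simp: F_def)
    show ?thesis
      unfolding union using F by (intro sum_emeasure) (auto simp: disjoint_family_on_def F_def)
  qed
  finally show ?thesis .
qed

definition min_Z_distr :: "nat \<Rightarrow> real measure" where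
  "min_Z_distr n = distr (sample_space n) borel (min_Z n)"

lemma prob_space_min_Z_distr: "prob_space (min_Z_distr n)"
  unfolding min_Z_distr_def by (intro prob_space.prob_space_distr prob_space_sample_space) simp

lemma sets_min_Z_distr [simp, measurable_cong]: "sets (min_Z_distr n) = sets borel"
  by (simp add: min_Z_distr_def)

lemma distr_min_Z_companion_V:
  assumes n: "0 < n"
  shows "distr (sample_space n) (borel \<Otimes>\<^sub>M borel) (\<lambda>\<omega>. (min_Z n \<omega>, companion_V n \<omega>))
    = min_Z_distr n \<Otimes>\<^sub>M std_normal"
proof (rule pair_measure_eqI[symmetric])
  show "sigma_finite_measure (min_Z_distr n)" "sigma_finite_measure std_normal"
    by (simp_all add: prob_space_imp_sigma_finite prob_space_min_Z_distr prob_space_std_normal)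
  show "sets (min_Z_distr n \<Otimes>\<^sub>M std_normal)
    = sets (distr (sample_space n) (borel \<Otimes>\<^sub>M borel) (\<lambda>\<omega>. (min_Z n \<omega>, companion_V n \<omega>)))"
    by (simp cong: sets_pair_measure_cong)
  fix A B assume "A \<in> sets (min_Z_distr n)" "B \<in> sets std_normal"
  then have A: "A \<in> sets borel" and B: "B \<in> sets borel" by simp_all
  have "emeasure (distr (sample_space n) (borel \<Otimes>\<^sub>M borel) (\<lambda>\<omega>. (min_Z n \<omega>, companion_V n \<omega>))) (A \<times> B)
      = emeasure (sample_space n) {\<omega> \<in> space (sample_space n). min_Z n \<omega> \<in> A \<and> companion_V n \<omega> \<in> B}"
    using A B by (subst emeasure_distr) (auto intro!: arg_cong[where f = "emeasure _"])
  also have "\<dots> = emeasure (min_Z_distr n) A * emeasure std_normal B"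
    using A unfolding emeasure_min_Z_companion_V[OF n A B] min_Z_distr_def
    by (subst emeasure_distr) (simp_all add: vimage_def Int_def conj_commute)
  finally show "emeasure (min_Z_distr n) A * emeasure std_normal B
      = emeasure (distr (sample_space n) (borel \<Otimes>\<^sub>M borel) (\<lambda>\<omega>. (min_Z n \<omega>, companion_V n \<omega>))) (A \<times> B)"
    by simp
qed

lemma emeasure_min_Z_distr_atMost:
  assumes n: "0 < n" shows "emeasure (min_Z_distr n) {..x} = min_cdf n x"
proof -
  let ?S = "space (sample_space n)"
  define T where "T = PiE {..<n} (\<lambda>_::nat. {x<..} \<times> (UNIV::real set))"
  have T: "T \<in> sets (sample_space n)"
    unfolding T_def sample_space_def by (intro sets_PiM_I_finite) (auto simp: sets_pair_measure_UV)
  have "emeasure (sample_space n) T = (\<Prod>j<n. emeasure pair_measure_UV ({x<..} \<times> UNIV))"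
    unfolding T_def sample_space_def by (intro PUV.emeasure_PiM) (auto simp: sets_pair_measure_UV)
  also have "emeasure pair_measure_UV ({x<..} \<times> UNIV) = emeasure std_normal {x<..}"
    unfolding pair_measure_UV_def using N.emeasure_space_1
    by (subst N.emeasure_pair_measure_Times) auto
  finally have T_prob: "emeasure (sample_space n) T = ennreal ((1 - Phi x) ^ n)"
    using Phi_le_1 by (simp add: N.emeasure_eq_measure measure_std_normal_Ioi ennreal_power)
  have "min_Z n -` {..x} \<inter> ?S = ?S - T"
  proof (intro set_eqI iffI)
    fix \<omega> assume "\<omega> \<in> min_Z n -` {..x} \<inter> ?S"
    then show "\<omega> \<in> ?S - T"
      using argmin_Z_less[OF n, of \<omega>] by (auto simp: T_def min_Z_def PiE_def Pi_def)
  next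
    fix \<omega> assume \<omega>: "\<omega> \<in> ?S - T"
    then obtain j where "j < n" "fst (\<omega> j) \<le> x"
      by (auto simp: T_def space_sample_space PiE_def Pi_def mem_Times_iff not_less)
    then show "\<omega> \<in> min_Z n -` {..x} \<inter> ?S"
      using min_Z_le[OF n, of j \<omega>] \<omega> by auto
  qed
  then have "emeasure (min_Z_distr n) {..x} = emeasure (sample_space n) (?S - T)"
    unfolding min_Z_distr_def by (subst emeasure_distr) auto
  also have "\<dots> = 1 - ennreal ((1 - Phi x) ^ n)"
    using T prob_space.emeasure_space_1[OF prob_space_sample_space] T_prob
    by (subst emeasure_Diff) (auto dest: sets.sets_into_space simp: prob_space.emeasure_space_1)
  also have "\<dots> = min_cdf n x"
    using Phi_le_1 Phi_nonneg
    by (simp add: min_cdf_def ennreal_minus[symmetric] power_le_one del: ennreal_minus)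
  finally show ?thesis .
qed

section \<open>Comparison with a Gaussian variable\<close>

definition normal_measure :: "real \<Rightarrow> real \<Rightarrow> real measure" where
  "normal_measure \<mu> \<sigma> = density lborel (normal_density \<mu> \<sigma>)"

lemma prob_space_normal_measure: "0 < \<sigma> \<Longrightarrow> prob_space (normal_measure \<mu> \<sigma>)"
  unfolding normal_measure_def by (rule prob_space_normal_density)

lemma sets_normal_measure [simp, measurable_cong]: "sets (normal_measure \<mu> \<sigma>) = sets borel"
  by (simp add: normal_measure_def)

lemma space_normal_measure [simp]: "space (normal_measure \<mu> \<sigma>) = UNIV"
  by (simp add: normal_measure_def)

lemma emeasure_atMost_std_normal_distributed:
  assumes "distributed M lborel X std_normal_density"
  shows "emeasure M (X -` {..z} \<inter> space M) = Phi z"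
proof -
  have "emeasure M (X -` {..z} \<inter> space M) = (\<integral>\<^sup>+x. ennreal (std_normal_density x) * indicator {..z} x \<partial>lborel)"
    by (rule distributed_emeasure[OF assms]) simp
  also have "\<dots> = emeasure std_normal {..z}"
    by (rule emeasure_std_normal[symmetric]) simp
  finally show ?thesis by (simp add: N.emeasure_eq_measure Phi_def)
qed

lemma emeasure_normal_measure_atMost:
  assumes "0 < \<sigma>" shows "emeasure (normal_measure \<mu> \<sigma>) {..x} = Phi ((x - \<mu>) / \<sigma>)"
proof -
  interpret W: prob_space "normal_measure \<mu> \<sigma>" by (rule prob_space_normal_measure[OF assms])
  have "distributed (normal_measure \<mu> \<sigma>) lborel (\<lambda>x. x) (normal_density \<mu> \<sigma>)"
    unfolding distributed_def normal_measure_def by (auto intro!: measure_eqI simp: emeasure_distr)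
  then have "distributed (normal_measure \<mu> \<sigma>) lborel (\<lambda>x. (x - \<mu>) / \<sigma>) std_normal_density"
    using W.normal_standard_normal_convert[OF assms] by simp
  moreover have "(\<lambda>x. (x - \<mu>) / \<sigma>) -` {..(x - \<mu>) / \<sigma>} = {..x}"
    using assms by (auto simp: divide_le_cancel)
  ultimately show ?thesis
    using emeasure_atMost_std_normal_distributed[of "normal_measure \<mu> \<sigma>" "\<lambda>x. (x - \<mu>) / \<sigma>" "(x - \<mu>) / \<sigma>"]
    by simp
qed

lemma (in prob_space) distr_pair_snd:
  assumes "sigma_finite_measure N" shows "distr (M \<Otimes>\<^sub>M N) N snd = N"
proof (intro measure_eqI)
  interpret N: sigma_finite_measure N by fact
  fix A assume A: "A \<in> sets (distr (M \<Otimes>\<^sub>M N) N snd)"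
  then have "emeasure (distr (M \<Otimes>\<^sub>M N) N snd) A = emeasure (M \<Otimes>\<^sub>M N) (space M \<times> A)"
    by (auto simp: emeasure_distr space_pair_measure dest: sets.sets_into_space
        intro!: arg_cong2[where f = emeasure])
  with A show "emeasure (distr (M \<Otimes>\<^sub>M N) N snd) A = emeasure N A"
    by (simp add: N.emeasure_pair_measure_Times emeasure_space_1)
qed simp

lemma emeasure_normal_pair_halfplane:
  assumes "\<rho> \<noteq> 0" "s \<noteq> 0" "0 < \<sigma>"
  shows "emeasure (normal_measure \<mu> \<sigma> \<Otimes>\<^sub>M std_normal) {p. \<rho> * fst p + s * snd p \<le> q}
    = Phi ((q - \<rho> * \<mu>) / sqrt ((\<rho> * \<sigma>)\<^sup>2 + s\<^sup>2))"
proof -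
  let ?W = "normal_measure \<mu> \<sigma>"
  let ?Q = "?W \<Otimes>\<^sub>M std_normal"
  interpret W: prob_space ?W by (rule prob_space_normal_measure[OF assms(3)])
  interpret Q: prob_space ?Q by (intro prob_space_pair W.prob_space_axioms prob_space_std_normal)
  have sets_Q: "sets ?Q = sets (borel \<Otimes>\<^sub>M borel)"
    by (intro sets_pair_measure_cong) simp_all
  have distr_fst: "distr ?Q M fst = ?W" if "sets M = sets borel" for M
    using N.distr_pair_fst[of ?W] that by (metis distr_cong sets_normal_measure)
  have distr_snd: "distr ?Q M snd = std_normal" if "sets M = sets borel" for M
    using W.distr_pair_snd[of std_normal] that prob_space_std_normal
    by (metis distr_cong prob_space_imp_sigma_finite sets_std_normal)
  have [measurable]: "fst \<in> borel_measurable ?Q" "snd \<in> borel_measurable ?Q"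
    by (simp_all add: measurable_cong_sets[OF sets_Q refl])
  have "distr ?Q (borel \<Otimes>\<^sub>M borel) (\<lambda>x. (fst x, snd x)) = ?Q"
    by (rule measure_eqI) (simp_all add: sets_Q emeasure_distr)
  then have indep: "Q.indep_var borel fst borel snd"
    unfolding Q.indep_var_distribution_eq using distr_fst distr_snd by simp
  have "distributed ?Q lborel fst (normal_density \<mu> \<sigma>)"
    unfolding distributed_def using distr_fst[of lborel] by (simp add: normal_measure_def)
  then have X: "distributed ?Q lborel (\<lambda>x. \<rho> * fst x) (normal_density (\<rho> * \<mu>) (\<bar>\<rho>\<bar> * \<sigma>))"
    using Q.normal_density_affine[of fst \<mu> \<sigma> \<rho> 0] assms by simp
  have "distributed ?Q lborel snd std_normal_density"
    unfolding distributed_def using distr_snd[of lborel] by (simp add: std_normal_def)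
  then have V: "distributed ?Q lborel (\<lambda>x. s * snd x) (normal_density 0 \<bar>s\<bar>)"
    using Q.normal_density_affine[of snd 0 1 s 0] assms by simp
  have "Q.indep_var borel ((\<lambda>x. \<rho> * x) \<circ> fst) borel ((\<lambda>x. s * x) \<circ> snd)"
    by (rule Q.indep_var_compose[OF indep]) auto
  then have "distributed ?Q lborel (\<lambda>x. \<rho> * fst x + s * snd x)
      (normal_density (\<rho> * \<mu> + 0) (sqrt ((\<bar>\<rho>\<bar> * \<sigma>)\<^sup>2 + \<bar>s\<bar>\<^sup>2)))"
    using Q.add_indep_normal[OF _ _ _ X V] assms by (simp add: comp_def)
  moreover define \<tau> where "\<tau> = sqrt ((\<rho> * \<sigma>)\<^sup>2 + s\<^sup>2)"
  moreover have \<tau>: "0 < \<tau>" using assms by (simp add: \<tau>_def add_nonneg_pos)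
  ultimately have std: "distributed ?Q lborel (\<lambda>x. ((\<rho> * fst x + s * snd x) - \<rho> * \<mu>) / \<tau>) std_normal_density"
    using Q.normal_standard_normal_convert[OF \<tau>] by (simp add: power_mult_distrib)
  have "(\<lambda>x. ((\<rho> * fst x + s * snd x) - \<rho> * \<mu>) / \<tau>) -` {..(q - \<rho> * \<mu>) / \<tau>} \<inter> space ?Q
      = {p. \<rho> * fst p + s * snd p \<le> q}"
    using \<tau> by (auto simp: space_pair_measure divide_le_cancel)
  with emeasure_atMost_std_normal_distributed[OF std, of "(q - \<rho> * \<mu>) / \<tau>"]
  show ?thesis by (simp add: \<tau>_def)
qed

lemma emeasure_pair_halfplane_mono:
  fixes M1 M2 N :: "real measure"
  assumes "sigma_finite_measure M1" "sigma_finite_measure M2" "sigma_finite_measure N"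
    and "sets M1 = sets borel" "sets M2 = sets borel" "sets N = sets borel"
    and "0 < \<rho>" and le: "\<And>x. emeasure M2 {..x} \<le> emeasure M1 {..x}"
  shows "emeasure (M2 \<Otimes>\<^sub>M N) {p. \<rho> * fst p + s * snd p \<le> q}
    \<le> emeasure (M1 \<Otimes>\<^sub>M N) {p. \<rho> * fst p + s * snd p \<le> q}"
proof -
  interpret M1N: pair_sigma_finite M1 N by (intro pair_sigma_finite.intro assms(1,3))
  interpret M2N: pair_sigma_finite M2 N by (intro pair_sigma_finite.intro assms(2,3))
  define H where "H = {p :: real \<times> real. \<rho> * fst p + s * snd p \<le> q}"
  have "{p \<in> space (borel \<Otimes>\<^sub>M borel). \<rho> * fst p + s * snd p \<le> q} \<in> sets (borel \<Otimes>\<^sub>M borel)"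
    by measurable
  then have H: "H \<in> sets (M1 \<Otimes>\<^sub>M N)" "H \<in> sets (M2 \<Otimes>\<^sub>M N)"
    using assms(4-6) by (simp_all add: H_def space_pair_measure cong: sets_pair_measure_cong)
  have slice: "(\<lambda>x. (x, v)) -` H = {..(q - s * v) / \<rho>}" for v
    using assms(7) by (auto simp: H_def field_simps)
  have "emeasure (M2 \<Otimes>\<^sub>M N) H = (\<integral>\<^sup>+ v. emeasure M2 {..(q - s * v) / \<rho>} \<partial>N)"
    using M2N.emeasure_pair_measure_alt2[OF H(2)] by (simp add: slice)
  also have "\<dots> \<le> (\<integral>\<^sup>+ v. emeasure M1 {..(q - s * v) / \<rho>} \<partial>N)"
    by (intro nn_integral_mono le)
  also have "\<dots> = emeasure (M1 \<Otimes>\<^sub>M N) H"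
    using M1N.emeasure_pair_measure_alt2[OF H(1)] by (simp add: slice)
  finally show ?thesis by (simp add: H_def)
qed

lemma emeasure_normal_pair_halfplane_nonneg:
  assumes "0 < \<rho>" "0 \<le> s" "0 < \<sigma>"
  shows "emeasure (normal_measure \<mu> \<sigma> \<Otimes>\<^sub>M std_normal) {p. \<rho> * fst p + s * snd p \<le> q}
    = Phi ((q - \<rho> * \<mu>) / sqrt ((\<rho> * \<sigma>)\<^sup>2 + s\<^sup>2))"
proof (cases "s = 0")
  case True
  interpret W: prob_space "normal_measure \<mu> \<sigma>" by (rule prob_space_normal_measure[OF assms(3)])
  have "{p. \<rho> * fst p + s * snd p \<le> q} = {..q / \<rho>} \<times> UNIV"
    using True assms(1) by (auto simp: field_simps)
  then have "emeasure (normal_measure \<mu> \<sigma> \<Otimes>\<^sub>M std_normal) {p. \<rho> * fst p + s * snd p \<le> q}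
      = Phi ((q / \<rho> - \<mu>) / \<sigma>)"
    using N.emeasure_pair_measure_Times[of "{..q / \<rho>}" "normal_measure \<mu> \<sigma>" UNIV] N.emeasure_space_1
    by (simp add: emeasure_normal_measure_atMost[OF assms(3)])
  also have "(q / \<rho> - \<mu>) / \<sigma> = (q - \<rho> * \<mu>) / sqrt ((\<rho> * \<sigma>)\<^sup>2 + s\<^sup>2)"
  proof -
    have "sqrt ((\<rho> * \<sigma>)\<^sup>2 + s\<^sup>2) = \<rho> * \<sigma>" using True assms by simp
    then show ?thesis using assms by (simp add: field_simps)
  qed
  finally show ?thesis .
qed (use assms emeasure_normal_pair_halfplane in auto)

lemma Phi_le_prob_min_Z_companion_halfplane:
  assumes n: "0 < n" and "0 < \<rho>" "0 \<le> s" "0 < \<sigma>"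
    and dom: "\<And>t. Phi ((t - \<mu>) / \<sigma>) \<le> min_cdf n t"
  shows "Phi ((q - \<rho> * \<mu>) / sqrt ((\<rho> * \<sigma>)\<^sup>2 + s\<^sup>2))
    \<le> measure (sample_space n) {\<omega> \<in> space (sample_space n). \<rho> * min_Z n \<omega> + s * companion_V n \<omega> \<le> q}"
proof -
  interpret S: prob_space "sample_space n" by (rule prob_space_sample_space)
  define H where "H = {p :: real \<times> real. \<rho> * fst p + s * snd p \<le> q}"
  have "{p \<in> space (borel \<Otimes>\<^sub>M borel). \<rho> * fst p + s * snd p \<le> q} \<in> sets (borel \<Otimes>\<^sub>M borel)"
    by measurable
  then have H: "H \<in> sets (borel \<Otimes>\<^sub>M borel)" by (simp add: H_def space_pair_measure)
  have "ennreal (Phi ((q - \<rho> * \<mu>) / sqrt ((\<rho> * \<sigma>)\<^sup>2 + s\<^sup>2))) = emeasure (normal_measure \<mu> \<sigma> \<Otimes>\<^sub>M std_normal) H"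
    unfolding H_def using assms(2-4) by (rule emeasure_normal_pair_halfplane_nonneg[symmetric])
  also have "\<dots> \<le> emeasure (min_Z_distr n \<Otimes>\<^sub>M std_normal) H"
    unfolding H_def
  proof (rule emeasure_pair_halfplane_mono)
    show "sigma_finite_measure (min_Z_distr n)" "sigma_finite_measure (normal_measure \<mu> \<sigma>)"
      "sigma_finite_measure std_normal"
      using prob_space_min_Z_distr prob_space_normal_measure[OF assms(4)] prob_space_std_normal
      by (simp_all add: prob_space_imp_sigma_finite)
    show "emeasure (normal_measure \<mu> \<sigma>) {..x} \<le> emeasure (min_Z_distr n) {..x}" for x
      using dom[of x] by (simp add: emeasure_normal_measure_atMost[OF assms(4)] emeasure_min_Z_distr_atMost[OF n] ennreal_leI)
  qed (use assms(2) in simp_all)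
  also have "\<dots> = emeasure (sample_space n) {\<omega> \<in> space (sample_space n). \<rho> * min_Z n \<omega> + s * companion_V n \<omega> \<le> q}"
    unfolding distr_min_Z_companion_V[OF n, symmetric] using H
    by (subst emeasure_distr) (auto simp: H_def intro!: arg_cong[where f = "emeasure _"])
  finally show ?thesis
    by (simp add: S.emeasure_eq_measure Phi_nonneg)
qed

section \<open>The success probability\<close>

definition success_event :: "nat \<Rightarrow> nat \<Rightarrow> real \<Rightarrow> real \<Rightarrow> (nat \<Rightarrow> real \<times> real) set" where
  "success_event n m \<alpha> \<rho> = {\<omega> \<in> space (sample_space n).
     \<exists>i<n. card {j \<in> {..<n}. Zval (\<omega> j) < Zval (\<omega> i)} < m \<and> Phi (Xval \<rho> (\<omega> i)) \<le> \<alpha>}"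

lemma p_success_G_eq: "p_success_G n m \<alpha> \<rho> = measure (sample_space n) (success_event n m \<alpha> \<rho>)"
  by (simp add: p_success_G_def success_event_def)

lemma borel_measurable_Phi: "Phi \<in> borel_measurable borel"
  by (rule borel_measurable_mono) (simp add: mono_def Phi_mono)

lemma real_card_eq_sum:
  fixes n :: nat shows "real (card {j \<in> {..<n}. P j}) = (\<Sum>j<n. if P j then 1 else 0)"
  using sum.inter_filter[of "{..<n}" "\<lambda>_. 1 :: real" P] by simp

lemma sets_success_event: "success_event n m \<alpha> \<rho> \<in> sets (sample_space n)"
proof -
  have [measurable]: "(\<lambda>\<omega>. real (card {j \<in> {..<n}. fst (\<omega> j) < fst (\<omega> i)})) \<in> borel_measurable (sample_space n)"
    for i unfolding real_card_eq_sum by measurable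
  have [measurable]: "(\<lambda>\<omega>. Phi (Xval \<rho> (\<omega> i))) \<in> borel_measurable (sample_space n)" for i
    using borel_measurable_Phi unfolding Xval_def by measurable
  have "success_event n m \<alpha> \<rho> = (\<Union>i<n. {\<omega> \<in> space (sample_space n).
      real (card {j \<in> {..<n}. fst (\<omega> j) < fst (\<omega> i)}) < m \<and> Phi (Xval \<rho> (\<omega> i)) \<le> \<alpha>})"
    by (auto simp: success_event_def Zval_def)
  also have "\<dots> \<in> sets (sample_space n)"
    by measurable
  finally show ?thesis .
qed

lemma p_success_G_mono:
  assumes "m \<le> m'" shows "p_success_G n m \<alpha> \<rho> \<le> p_success_G n m' \<alpha> \<rho>"
proof -
  interpret S: prob_space "sample_space n" by (rule prob_space_sample_space)
  have "success_event n m \<alpha> \<rho> \<subseteq> success_event n m' \<alpha> \<rho>"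
    using assms unfolding success_event_def by (auto intro: order.strict_trans2)
  then show ?thesis
    unfolding p_success_G_eq using sets_success_event by (rule S.finite_measure_mono)
qed

lemma argmin_Z_in_success_event:
  assumes "0 < n" "\<omega> \<in> space (sample_space n)" "Phi (Xval \<rho> (\<omega> (argmin_Z n \<omega>))) \<le> \<alpha>"
  shows "\<omega> \<in> success_event n 1 \<alpha> \<rho>"
proof -
  have "{j \<in> {..<n}. Zval (\<omega> j) < Zval (\<omega> (argmin_Z n \<omega>))} = {}"
    using min_Z_le[OF assms(1), of _ \<omega>] by (force simp: Zval_def min_Z_def)
  then show ?thesis
    using assms argmin_Z_less[OF assms(1), of \<omega>] unfolding success_event_def by auto
qed

lemma success_event_1_1: "0 < n \<Longrightarrow> success_event n 1 1 \<rho> = space (sample_space n)"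
  using argmin_Z_in_success_event[OF _ _ Phi_le_1] by (auto simp: success_event_def)

lemma Phi_le_p_success_G:
  assumes n: "0 < n" and \<rho>: "0 < \<rho>" "\<rho> \<le> 1" and \<alpha>: "0 < \<alpha>" "\<alpha> < 1" and "0 < \<sigma>"
    and dom: "\<And>t. Phi ((t - \<mu>) / \<sigma>) \<le> min_cdf n t"
  shows "Phi ((Phi_inv \<alpha> - \<rho> * \<mu>) / sqrt (1 - \<rho>\<^sup>2 + \<rho>\<^sup>2 * \<sigma>\<^sup>2)) \<le> p_success_G n 1 \<alpha> \<rho>"
proof -
  interpret S: prob_space "sample_space n" by (rule prob_space_sample_space)
  define q where "q = Phi_inv \<alpha>"
  define s where "s = sqrt (1 - \<rho>\<^sup>2)"
  have s: "0 \<le> s" "s\<^sup>2 = 1 - \<rho>\<^sup>2" using \<rho> by (simp_all add: s_def power_le_one)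
  have "{\<omega> \<in> space (sample_space n). \<rho> * min_Z n \<omega> + s * companion_V n \<omega> \<le> q} \<subseteq> success_event n 1 \<alpha> \<rho>"
  proof safe
    fix \<omega> assume \<omega>: "\<omega> \<in> space (sample_space n)" "\<rho> * min_Z n \<omega> + s * companion_V n \<omega> \<le> q"
    have "Phi (Xval \<rho> (\<omega> (argmin_Z n \<omega>))) \<le> Phi q"
      using \<omega>(2) by (intro Phi_mono) (simp add: Xval_def min_Z_def companion_V_def s_def)
    then show "\<omega> \<in> success_event n 1 \<alpha> \<rho>"
      using argmin_Z_in_success_event[OF n \<omega>(1)] Phi_Phi_inv[OF \<alpha>] by (simp add: q_def)
  qed
  then have "measure (sample_space n) {\<omega> \<in> space (sample_space n). \<rho> * min_Z n \<omega> + s * companion_V n \<omega> \<le> q}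
      \<le> p_success_G n 1 \<alpha> \<rho>"
    unfolding p_success_G_eq using sets_success_event by (rule S.finite_measure_mono)
  moreover have "(\<rho> * \<sigma>)\<^sup>2 + s\<^sup>2 = 1 - \<rho>\<^sup>2 + \<rho>\<^sup>2 * \<sigma>\<^sup>2"
    using s by (simp add: power_mult_distrib)
  ultimately show ?thesis
    using Phi_le_prob_min_Z_companion_halfplane[OF n \<rho>(1) s(1) \<open>0 < \<sigma>\<close> dom, of q]
    by (simp add: q_def)
qed

lemma gauss_bound_le_p_success_G:
  assumes "0 < n" "0 < \<rho>" "\<rho> \<le> 1" "0 < \<alpha>" "\<alpha> \<le> 1" "0 < sigma2_n n \<theta>"
    and "\<And>t. Phi ((t - mu_n n \<theta>) / sqrt (sigma2_n n \<theta>)) \<le> min_cdf n t"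
  shows "gauss_bound n \<theta> \<alpha> \<rho> \<le> p_success_G n 1 \<alpha> \<rho>"
proof (cases "\<alpha> = 1")
  case True
  interpret S: prob_space "sample_space n" by (rule prob_space_sample_space)
  show ?thesis
    using True success_event_1_1[OF assms(1)] by (simp add: gauss_bound_def p_success_G_eq S.prob_space)
next
  case False
  then show ?thesis
    using Phi_le_p_success_G[of n \<rho> \<alpha> "sqrt (sigma2_n n \<theta>)" "mu_n n \<theta>"] assms
    by (simp add: gauss_bound_def)
qed

lemma tan_gt_self: assumes "0 < u" "u < pi/2" shows "u < tan u"
proof -
  have "\<exists>z. 0 < z \<and> z < u \<and> (tan u - u) - (tan 0 - 0) = (u - 0) * (inverse ((cos z)\<^sup>2) - 1)"
  proof (rule MVT2)
    fix x assume "0 \<le> x" "x \<le> u"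
    then have "cos x \<noteq> 0" using assms by (intro order.strict_implies_not_eq[symmetric] cos_gt_zero_pi) auto
    then show "((\<lambda>x. tan x - x) has_real_derivative inverse ((cos x)\<^sup>2) - 1) (at x)"
      by (auto intro!: derivative_eq_intros)
  qed (use assms in auto)
  then obtain z where z: "0 < z" "z < u" "tan u - u = u * (inverse ((cos z)\<^sup>2) - 1)" by auto
  have "0 < cos z" "0 < sin z" using z assms by (auto intro!: cos_gt_zero_pi sin_gt_zero)
  then have "(cos z)\<^sup>2 < 1"
    using sin_cos_squared_add[of z] by (smt (verit) zero_less_power)
  then have "1 < inverse ((cos z)\<^sup>2)"
    using \<open>0 < cos z\<close> by (simp add: one_less_inverse)
  then have "0 < u * (inverse ((cos z)\<^sup>2) - 1)" using assms(1) by simp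
  then show ?thesis using z(3) by linarith
qed

lemma c2_gt_half: assumes "0 < \<theta>" "\<theta> < pi/2" shows "1/2 < c2 \<theta>"
proof -
  define u where "u = pi/2 - \<theta>"
  have u: "0 < u" "u < pi/2" using assms by (auto simp: u_def)
  have "c2 \<theta> = tan u / (2 * u)"
    by (simp add: c2_def u_def tan_cot')
  then have "u * 1 < u * (2 * c2 \<theta>)"
    using tan_gt_self[OF u] u by (simp add: field_simps)
  then have "1 < 2 * c2 \<theta>"
    using u(1) by (simp only: mult_less_cancel_left_pos)
  then show ?thesis by simp
qed

lemma c1_pos: "0 < \<theta> \<Longrightarrow> \<theta> < pi/2 \<Longrightarrow> 0 < c1 \<theta>"
  by (simp add: c1_def field_simps)

lemma c1_le_1: "0 < \<theta> \<Longrightarrow> c1 \<theta> \<le> 1"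
  using pi_gt_zero by (simp add: c1_def field_simps)

lemma eventually_Phi_mu_sigma_le_min_cdf:
  assumes "0 < \<theta>" "\<theta> < pi/2"
  shows "\<forall>\<^sub>F n in sequentially. 0 < sigma2_n n \<theta> \<and>
    (\<forall>t. Phi ((t - mu_n n \<theta>) / sqrt (sigma2_n n \<theta>)) \<le> min_cdf n t)"
proof -
  \<comment> \<open>the paper's constants in the form of the general estimate, with \<open>\<kappa> = - ln (ln 2)\<close>\<close>
  have \<kappa>: "0 < - ln (ln (2::real))" using ln_2_less_1 by (simp add: ln_less_zero)
  have a: "1/2 < c2 \<theta>" using c2_gt_half[OF assms] .
  show ?thesis
    using eventually_Phi_le_min_cdf[OF a c1_pos[OF assms] c1_le_1[OF assms(1)] \<kappa>]
  proof eventually_elim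
    case (elim n)
    then have "0 < ln (n * c1 \<theta>)" by blast
    then have "0 < ln (n * c1 \<theta>) - ln (ln 2)" using \<kappa> by linarith
    then have "0 < 2 * c2 \<theta> * (ln (n * c1 \<theta>) - ln (ln 2))" using a by simp
    then have "0 < sigma2_n n \<theta>"
      using \<kappa> by (simp add: sigma2_n_def divide_neg_pos)
    moreover have "sigma2_n n \<theta> = - ln (ln 2) / (2 * c2 \<theta> * (ln (n * c1 \<theta>) + - ln (ln 2)))"
      by (simp add: sigma2_n_def)
    moreover have "t - mu_n n \<theta> = t + sqrt (ln (n * c1 \<theta>) / c2 \<theta>)" for t
      by (simp add: mu_n_def)
    ultimately show ?case
      using elim by (metis (no_types, lifting))
  qed
qed

lemma good_threshold_exists: "0 < \<theta> \<Longrightarrow> \<theta> < pi/2 \<Longrightarrow> \<exists>n0. good_threshold \<theta> n0"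
proof -
  assume \<theta>: "0 < \<theta>" "\<theta> < pi/2"
  obtain N where N: "\<And>n. N \<le> n \<Longrightarrow> 0 < sigma2_n n \<theta> \<and>
      (\<forall>t. Phi ((t - mu_n n \<theta>) / sqrt (sigma2_n n \<theta>)) \<le> min_cdf n t)"
    using eventually_Phi_mu_sigma_le_min_cdf[OF \<theta>] by (auto simp: eventually_sequentially)
  have "good_threshold \<theta> (max N 1)"
    unfolding good_threshold_def
  proof (intro allI impI ballI conjI)
    fix n m \<rho> \<alpha> assume n: "max N 1 \<le> n" and m: "m \<in> {1..n}"
      and \<rho>: "\<rho> \<in> {0<..1::real}" and \<alpha>: "\<alpha> \<in> {0<..1::real}"
    show "p_success_G n 1 \<alpha> \<rho> \<le> p_success_G n m \<alpha> \<rho>"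
      using m by (intro p_success_G_mono) simp
    show "gauss_bound n \<theta> \<alpha> \<rho> \<le> p_success_G n 1 \<alpha> \<rho>"
      using N[of n] n \<rho> \<alpha> by (intro gauss_bound_le_p_success_G) auto
  qed
  then show ?thesis ..
qed

theorem mainTheorem7:
  shows "(\<forall>\<theta>. 0 < \<theta> \<and> \<theta> < pi/2 \<longrightarrow> (\<exists>n0::nat.
            \<forall>n\<ge>n0. \<forall>m\<in>{1..n}. \<forall>\<rho>\<in>{0<..1}. \<forall>\<alpha>\<in>{0<..1}.
              p_success_G n 1 \<alpha> \<rho> \<le> p_success_G n m \<alpha> \<rho> \<and>
              gauss_bound n \<theta> \<alpha> \<rho> \<le> p_success_G n 1 \<alpha> \<rho>))
       \<and> (\<forall>n::nat. \<forall>m\<in>{1..n}. \<forall>\<rho>\<in>{0<..1}. \<forall>\<alpha>\<in>{0<..1}.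
              p_success_G n 1 \<alpha> \<rho> \<le> p_success_G n m \<alpha> \<rho> \<and>
              (SUP \<theta>\<in>Theta_n n. ereal (gauss_bound n \<theta> \<alpha> \<rho>))
                \<le> ereal (p_success_G n 1 \<alpha> \<rho>))"
proof (intro conjI allI impI ballI)
  fix \<theta> :: real assume "0 < \<theta> \<and> \<theta> < pi/2"
  then show "\<exists>n0::nat. \<forall>n\<ge>n0. \<forall>m\<in>{1..n}. \<forall>\<rho>\<in>{0<..1}. \<forall>\<alpha>\<in>{0<..1}.
      p_success_G n 1 \<alpha> \<rho> \<le> p_success_G n m \<alpha> \<rho> \<and> gauss_bound n \<theta> \<alpha> \<rho> \<le> p_success_G n 1 \<alpha> \<rho>"
    using good_threshold_exists unfolding good_threshold_def by blast
next
  fix n m :: nat and \<rho> \<alpha> :: real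
  assume m: "m \<in> {1..n}" and \<rho>: "\<rho> \<in> {0<..1}" and \<alpha>: "\<alpha> \<in> {0<..1}"
  show "p_success_G n 1 \<alpha> \<rho> \<le> p_success_G n m \<alpha> \<rho>"
    using m by (intro p_success_G_mono) simp
  show "(SUP \<theta>\<in>Theta_n n. ereal (gauss_bound n \<theta> \<alpha> \<rho>)) \<le> ereal (p_success_G n 1 \<alpha> \<rho>)"
  proof (rule SUP_least)
    fix \<theta> assume "\<theta> \<in> Theta_n n"
    then have \<theta>: "0 < \<theta>" "\<theta> < pi/2" and "n_star \<theta> \<le> n" by (auto simp: Theta_n_def)
    moreover have "good_threshold \<theta> (n_star \<theta>)"
      unfolding n_star_def using good_threshold_exists[OF \<theta>] by (rule LeastI_ex)
    ultimately show "ereal (gauss_bound n \<theta> \<alpha> \<rho>) \<le> ereal (p_success_G n 1 \<alpha> \<rho>)"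
      using m \<rho> \<alpha> unfolding good_threshold_def by simp
  qed
qed

end
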